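(* Let $f:\mathbb{E}\to\mathbb{R}\cup\{+\infty\}$ be a proper extended real function that is strongly pseudoconvex (in the Hadamard sense) at $\bar x\in\operatorname{dom} f$. Then $\bar x$ is an isolated local minimizer of second order of $f$ if and only if $0\in\partial^{(1)}_- f(\bar x)$.
   Context: $\mathbb{E}$ is a real finite-dimensional Euclidean space; $\operatorname{dom} f=\{x:f(x)<+\infty\}$. For $x\in\operatorname{dom} f$: $f^{(1)}_-(x;u)=\liminf_{t\downarrow 0,\,u'\to u} t^{-1}[f(x+tu')-f(x)]$ and $\partial^{(1)}_- f(x)=\{x^*\in L^1(\mathbb{E}) : x^*(u)\le f^{(1)}_-(x;u)\ \forall u\in\mathbb{E}\}$ ($L^1(\mathbb{E})$ = linear functionals). $f$ is strongly pseudoconvex at $\bar x\in\operatorname{dom} f$ iff for every $d\in\mathbb{E}$ with $\|d\|=1$ and $f^{(1)}_-(\bar x;d)=0$ there exist $\varepsilon>0$, $\delta>0$, $\alpha>0$ such that $f(\bar x+td')\ge f(\bar x)+\alpha t^2$ for all $t\in[0,\delta)$ and all $d'\in\mathbb{E}$ with $\|d'\|=1$, $\|d'-d\|<\varepsilon$. $\bar x$ is an isolated local minimizer of second order iff there exist a neighborhood $N$ of $\bar x$ and $C>0$ with $f(x)>f(\bar x)+C\|x-\bar x\|^2$ for all $x\in N\setminus\{\bar x\}$. *)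

theory Defs
  imports "HOL-Analysis.Analysis"
begin

text \<open>Extended real functions f : E \<Rightarrow> \<real> \<union> {+\<infinity>} are modelled as functions into ereal
  that never take the value -\<infinity>.\<close>

definition proper_fun :: "('a \<Rightarrow> ereal) \<Rightarrow> bool" where
  "proper_fun f \<longleftrightarrow> (\<forall>x. f x \<noteq> -\<infinity>) \<and> (\<exists>x. f x < \<infinity>)"

definition dom_fun :: "('a \<Rightarrow> ereal) \<Rightarrow> 'a set" where
  "dom_fun f = {x. f x < \<infinity>}"

definition lower_hadamard_dd :: "('a::real_normed_vector \<Rightarrow> ereal) \<Rightarrow> 'a \<Rightarrow> 'a \<Rightarrow> ereal" where
  "lower_hadamard_dd f x u =
     Liminf (at_right (0::real) \<times>\<^sub>F nhds u)
       (\<lambda>(t, u'). (f (x + t *\<^sub>R u') - f x) / ereal t)"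

definition lower_hadamard_subdiff :: "('a::real_normed_vector \<Rightarrow> ereal) \<Rightarrow> 'a \<Rightarrow> ('a \<Rightarrow> real) set" where
  "lower_hadamard_subdiff f x =
     {xs. linear xs \<and> (\<forall>u. ereal (xs u) \<le> lower_hadamard_dd f x u)}"

definition strongly_pseudoconvex_at :: "('a::real_normed_vector \<Rightarrow> ereal) \<Rightarrow> 'a \<Rightarrow> bool" where
  "strongly_pseudoconvex_at f xb \<longleftrightarrow>
     (\<forall>d. norm d = 1 \<and> lower_hadamard_dd f xb d = 0 \<longrightarrow>
        (\<exists>\<epsilon>>0. \<exists>\<delta>>0. \<exists>\<alpha>>0. \<forall>t d'. 0 \<le> t \<and> t < \<delta> \<and> norm d' = 1 \<and> norm (d' - d) < \<epsilon> \<longrightarrow>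
            f (xb + t *\<^sub>R d') \<ge> f xb + ereal (\<alpha> * t\<^sup>2)))"

definition isolated_local_min_2nd :: "('a::real_normed_vector \<Rightarrow> ereal) \<Rightarrow> 'a \<Rightarrow> bool" where
  "isolated_local_min_2nd f xb \<longleftrightarrow>
     (\<exists>N C. open N \<and> xb \<in> N \<and> C > 0 \<and>
        (\<forall>x\<in>N - {xb}. f x > f xb + ereal (C * (norm (x - xb))\<^sup>2)))"

end

theory Submission
  imports Defs
begin

text \<open>An isolated minimizer of second order is a local minimizer, so the difference quotients
  defining the lower Hadamard derivative are eventually nonnegative. Conversely, if second-order
  growth fails, there are points \<open>x + t\<^sub>k d\<^sub>k\<close> with \<open>t\<^sub>k \<rightarrow> 0\<close>, \<open>norm d\<^sub>k = 1\<close> and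
  \<open>f (x + t\<^sub>k d\<^sub>k) \<le> f x + c\<^sub>k t\<^sub>k\<^sup>2\<close> with \<open>c\<^sub>k \<rightarrow> 0\<close>. By compactness of the sphere the directions
  converge along a subsequence to some \<open>d\<close>, where the quotients are at most \<open>c\<^sub>k t\<^sub>k \<rightarrow> 0\<close>;
  so the derivative vanishes in direction \<open>d\<close>, and strong pseudoconvexity there gives
  \<open>f (x + t\<^sub>k d\<^sub>k) \<ge> f x + \<alpha> t\<^sub>k\<^sup>2\<close> for large \<open>k\<close>, contradicting \<open>c\<^sub>k \<rightarrow> 0\<close>.\<close>

lemma Liminf_le_Liminf_filterlim:
  fixes g :: "'a \<Rightarrow> 'b::complete_linorder"
  assumes "filterlim h F G"
  shows "Liminf F g \<le> Liminf G (\<lambda>k. g (h k))"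
  unfolding le_Liminf_iff
proof (intro allI impI)
  fix y assume "y < Liminf F g"
  then have "eventually (\<lambda>p. y < g p) F" by (simp add: less_LiminfD)
  then show "eventually (\<lambda>k. y < g (h k)) G" using assms by (rule eventually_compose_filterlim)
qed

lemma ereal_diff_quotient_le:
  assumes "\<bar>a\<bar> \<noteq> \<infinity>" and "z \<le> a + ereal c" and "t > 0"
  shows "(z - a) / ereal t \<le> ereal (c / t)"
  using assms by (cases a; cases z) (auto simp: ereal_divide_eq divide_right_mono)

lemma zero_in_lower_hadamard_subdiff_iff:
  "(\<lambda>_. 0) \<in> lower_hadamard_subdiff f x \<longleftrightarrow> (\<forall>u. 0 \<le> lower_hadamard_dd f x u)"
  by (simp add: lower_hadamard_subdiff_def linear_zero zero_ereal_def)

lemma isolated_local_min_2nd_imp_local_min: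
  assumes "isolated_local_min_2nd f x"
  shows "eventually (\<lambda>y. f x \<le> f y) (nhds x)"
proof -
  obtain N C where N: "open N" "x \<in> N" "C > 0"
    and gt: "\<And>y. y \<in> N - {x} \<Longrightarrow> f y > f x + ereal (C * (norm (y - x))\<^sup>2)"
    using assms unfolding isolated_local_min_2nd_def by blast
  have "f x \<le> f y" if "y \<in> N" for y
  proof (cases "y = x")
    case False
    have "f x \<le> f x + ereal (C * (norm (y - x))\<^sup>2)"
      using N(3) by (simp add: add_increasing2)
    with gt[of y] \<open>y \<in> N\<close> False show ?thesis by simp
  qed simp
  then show ?thesis using N(1,2) eventually_nhds by blast
qed

lemma lower_hadamard_dd_nonneg_at_local_min:
  fixes f :: "'a::real_normed_vector \<Rightarrow> ereal"
  assumes fin: "\<bar>f x\<bar> \<noteq> \<infinity>" and min: "eventually (\<lambda>y. f x \<le> f y) (nhds x)"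
  shows "0 \<le> lower_hadamard_dd f x u"
proof -
  let ?F = "at_right (0::real) \<times>\<^sub>F nhds u"
  have "(fst \<longlongrightarrow> 0) ?F"
    using filterlim_fst[of "at_right (0::real)" "nhds u"] by (simp add: filterlim_at)
  from tendsto_add[OF tendsto_const tendsto_scaleR[OF this filterlim_snd]]
  have "filterlim (\<lambda>p. x + fst p *\<^sub>R snd p) (nhds x) ?F" by simp
  then have "eventually (\<lambda>p. f x \<le> f (x + fst p *\<^sub>R snd p)) ?F"
    using eventually_compose_filterlim[OF min] by blast
  moreover have "eventually (\<lambda>p. 0 < fst p) ?F"
    by (rule eventually_compose_filterlim[OF eventually_at_right_less filterlim_fst])
  ultimately have "eventually (\<lambda>p. 0 \<le> (f (x + fst p *\<^sub>R snd p) - f x) / ereal (fst p)) ?F"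
  proof eventually_elim
    case (elim p)
    then show ?case using fin
      by (cases "f x"; cases "f (x + fst p *\<^sub>R snd p)")
        (auto simp: ereal_divide_eq divide_nonneg_pos)
  qed
  then show ?thesis
    unfolding lower_hadamard_dd_def case_prod_beta by (rule Liminf_bounded)
qed

lemma not_isolated_local_min_2nd_imp_seq:
  fixes f :: "'a::real_normed_vector \<Rightarrow> ereal"
  assumes "\<not> isolated_local_min_2nd f x"
  obtains t d c where "\<And>k. 0 < t k" "t \<longlonglongrightarrow> 0" "\<And>k. norm (d k) = 1" "c \<longlonglongrightarrow> 0"
    "\<And>k. f (x + t k *\<^sub>R d k) \<le> f x + ereal (c k * (t k)\<^sup>2)"
proof -
  define c where "c k = inverse (real (Suc k))" for k
  have no_min: "\<exists>y\<in>N - {x}. f y \<le> f x + ereal (C * (norm (y - x))\<^sup>2)"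
    if "open N" "x \<in> N" "C > 0" for N C
    using assms that unfolding isolated_local_min_2nd_def by (meson not_less)
  have "\<exists>y. y \<in> ball x (c k) - {x} \<and> f y \<le> f x + ereal (c k * (norm (y - x))\<^sup>2)" for k
    using no_min[of "ball x (c k)" "c k"] by (auto simp: c_def)
  then obtain y where y: "\<And>k. y k \<in> ball x (c k) - {x}"
    and y_le: "\<And>k. f (y k) \<le> f x + ereal (c k * (norm (y k - x))\<^sup>2)"
    by metis
  define t where "t k = norm (y k - x)" for k
  define d where "d k = inverse (t k) *\<^sub>R (y k - x)" for k
  have t_pos: "0 < t k" for k using y[of k] by (simp add: t_def)
  have y_eq: "y k = x + t k *\<^sub>R d k" for k using t_pos[of k] by (simp add: d_def)
  have c_lim: "c \<longlonglongrightarrow> 0" unfolding c_def by (rule LIMSEQ_inverse_real_of_nat)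
  have "norm (t k) \<le> c k" for k
    using y[of k] by (simp add: t_def dist_norm norm_minus_commute)
  then have "t \<longlonglongrightarrow> 0" by (intro Lim_null_comparison[OF always_eventually c_lim]) blast
  moreover have "norm (d k) = 1" for k using t_pos[of k] by (simp add: d_def t_def)
  moreover have "f (x + t k *\<^sub>R d k) \<le> f x + ereal (c k * (t k)\<^sup>2)" for k
    using y_le[of k] unfolding y_eq[symmetric] by (simp add: t_def)
  ultimately show thesis using that t_pos c_lim by blast
qed

lemma lower_hadamard_dd_nonpos_along_seq:
  fixes f :: "'a::real_normed_vector \<Rightarrow> ereal"
  assumes fin: "\<bar>f x\<bar> \<noteq> \<infinity>"
    and t: "\<And>k. 0 < t k" "t \<longlonglongrightarrow> 0" and d: "d \<longlonglongrightarrow> l" and c: "c \<longlonglongrightarrow> 0"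
    and le: "\<And>k. f (x + t k *\<^sub>R d k) \<le> f x + ereal (c k * (t k)\<^sup>2)"
  shows "lower_hadamard_dd f x l \<le> 0"
proof -
  define g where "g = (\<lambda>(s, u). (f (x + s *\<^sub>R u) - f x) / ereal s)"
  have "filterlim (\<lambda>k. (t k, d k)) (at_right 0 \<times>\<^sub>F nhds l) sequentially"
    using t by (intro filterlim_Pair d filterlim_at_withinI) simp_all
  then have "lower_hadamard_dd f x l \<le> liminf (\<lambda>k. g (t k, d k))"
    unfolding lower_hadamard_dd_def g_def by (rule Liminf_le_Liminf_filterlim)
  also have "\<dots> \<le> liminf (\<lambda>k. ereal (c k * t k))"
  proof (rule Liminf_mono, intro always_eventually allI)
    fix k
    have "g (t k, d k) \<le> ereal (c k * (t k)\<^sup>2 / t k)"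
      unfolding g_def using ereal_diff_quotient_le[OF fin le t(1)] by simp
    then show "g (t k, d k) \<le> ereal (c k * t k)"
      using t(1)[of k] by (simp add: power2_eq_square)
  qed
  also have "\<dots> = 0"
    using tendsto_mult[OF c t(2)] by (intro lim_imp_Liminf) (simp_all add: zero_ereal_def)
  finally show ?thesis .
qed

lemma isolated_local_min_2nd_if_lower_hadamard_dd_nonneg:
  fixes f :: "'a::euclidean_space \<Rightarrow> ereal"
  assumes fin: "\<bar>f x\<bar> \<noteq> \<infinity>" and sp: "strongly_pseudoconvex_at f x"
    and nonneg: "\<And>u. 0 \<le> lower_hadamard_dd f x u"
  shows "isolated_local_min_2nd f x"
proof (rule ccontr)
  assume "\<not> isolated_local_min_2nd f x"
  then obtain t d c where t: "\<And>k. 0 < t k" "t \<longlonglongrightarrow> 0" and d: "\<And>k. norm (d k) = 1"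
    and c: "c \<longlonglongrightarrow> 0" and le: "\<And>k. f (x + t k *\<^sub>R d k) \<le> f x + ereal (c k * (t k)\<^sup>2)"
    using not_isolated_local_min_2nd_imp_seq by blast
  have "d k \<in> sphere 0 1" for k using d by simp
  then obtain l r where l: "l \<in> sphere 0 1" and r: "strict_mono r" and dr: "(d \<circ> r) \<longlonglongrightarrow> l"
    using compact_imp_seq_compact[OF compact_sphere] unfolding seq_compact_def by metis
  have "lower_hadamard_dd f x l \<le> 0"
    using LIMSEQ_subseq_LIMSEQ[OF t(2) r] LIMSEQ_subseq_LIMSEQ[OF c r] dr t(1) le
    by (intro lower_hadamard_dd_nonpos_along_seq
        [where f = f and x = x and t = "t \<circ> r" and d = "d \<circ> r" and c = "c \<circ> r", OF fin])
      auto
  with nonneg[of l] have "lower_hadamard_dd f x l = 0" by simp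
  with sp l obtain \<epsilon> \<delta> \<alpha> where "\<epsilon> > 0" "\<delta> > 0" "\<alpha> > 0"
    and grow: "\<And>s d'. 0 \<le> s \<Longrightarrow> s < \<delta> \<Longrightarrow> norm d' = 1 \<Longrightarrow> norm (d' - l) < \<epsilon> \<Longrightarrow>
        f x + ereal (\<alpha> * s\<^sup>2) \<le> f (x + s *\<^sub>R d')"
    unfolding strongly_pseudoconvex_at_def by auto
  have "eventually (\<lambda>k. t (r k) < \<delta> \<and> norm (d (r k) - l) < \<epsilon> \<and> c (r k) < \<alpha>) sequentially"
    using LIMSEQ_subseq_LIMSEQ[OF t(2) r] LIMSEQ_subseq_LIMSEQ[OF c r] dr
      \<open>\<epsilon> > 0\<close> \<open>\<delta> > 0\<close> \<open>\<alpha> > 0\<close>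
    by (intro eventually_conj order_tendstoD(2)) (auto simp: o_def intro: tendsto_norm_zero LIM_zero)
  then obtain k where k: "t (r k) < \<delta>" "norm (d (r k) - l) < \<epsilon>" "c (r k) < \<alpha>"
    by (auto dest: eventually_happens)
  have "f x + ereal (\<alpha> * (t (r k))\<^sup>2) \<le> f x + ereal (c (r k) * (t (r k))\<^sup>2)"
    using grow[OF less_imp_le[OF t(1)] k(1) d k(2)] le[of "r k"] by (rule order_trans)
  moreover have "c (r k) * (t (r k))\<^sup>2 < \<alpha> * (t (r k))\<^sup>2"
    using k(3) t(1)[of "r k"] by (simp add: mult_strict_right_mono)
  ultimately show False using fin by (cases "f x") auto
qed

theorem theorem5:
  fixes f :: "'a::euclidean_space \<Rightarrow> ereal" and xb :: 'a
  assumes "proper_fun f"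
    and "xb \<in> dom_fun f"
    and "strongly_pseudoconvex_at f xb"
  shows "isolated_local_min_2nd f xb \<longleftrightarrow> (\<lambda>_. 0) \<in> lower_hadamard_subdiff f xb"
proof -
  have fin: "\<bar>f xb\<bar> \<noteq> \<infinity>"
    using assms(1,2) unfolding proper_fun_def dom_fun_def by (cases "f xb") auto
  show ?thesis
    unfolding zero_in_lower_hadamard_subdiff_iff
  proof
    assume "isolated_local_min_2nd f xb"
    then show "\<forall>u. 0 \<le> lower_hadamard_dd f xb u"
      using lower_hadamard_dd_nonneg_at_local_min[of f xb, OF fin]
        isolated_local_min_2nd_imp_local_min
      by blast
  next
    assume "\<forall>u. 0 \<le> lower_hadamard_dd f xb u"
    then show "isolated_local_min_2nd f xb"
      using isolated_local_min_2nd_if_lower_hadamard_dd_nonneg[of f xb, OF fin assms(3)] by blast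
  qed
qed

end
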